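(* Let $\hat{\mathcal{Z}}_k=\langle \hat c_k,\hat G_k\rangle\subset\mathbb{R}^n$ be a zonotope with $\mathcal{R}_{\phi,k}\subseteq\hat{\mathcal{Z}}_k$. For $i=1,\dots,n_{\phi,k}$ let the side information at step $k$ be encoded by a set $\mathcal{S}_{i,k}\subseteq\mathbb{R}^n$ such that every $x\in\mathcal{R}_{\phi,k}$ lies in $\mathcal{S}_{i,k}$, where each $\mathcal{S}_{i,k}$ is of one of two types: (linear) $\mathcal{S}_{i,k}=\{x:|H_{i,k}x-y_{i,k}|\le r_{i,k}\}$ with $H_{i,k}\in\mathbb{R}^{p\times n}$, $y_{i,k}\in\mathbb{R}^p$, $r_{i,k}\in\mathbb{R}^p_{\ge 0}$; (nonlinear) $\mathcal{S}_{i,k}=\{x:|h_{i,k}(x)|\le r_{i,k}\}$ with $h_{i,k}:\mathbb{R}^n\to\mathbb{R}^p$ differentiable and $r_{i,k}\in\mathbb{R}^p_{\ge0}$ (absolute values and inequalities componentwise). Run the following procedure. Initialize $\bar c_k=\hat c_k$, $\bar G_k=\hat G_k$. For $i=1,\dots,n_{\phi,k}$ in order, with an arbitrary matrix $\lambda_{i,k}\in\mathbb{R}^{n\times p}$: - in the linear case, set $\bar c_k\leftarrow \bar c_k+\lambda_{i,k}(y_{i,k}-H_{i,k}\bar c_k)$ and $\bar G_k\leftarrow\big[(I-\lambda_{i,k}H_{i,k})\bar G_k,\ \lambda_{i,k}\operatorname{diag}(r_{i,k})\big]$; - in the nonlinear case, pick a point $x^*_{i,k}\in\mathbb{R}^n$,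 let $J_{i,k}=\frac{\partial h_{i,k}}{\partial x}\big|_{x^*_{i,k}}$, and pick a zonotope $\langle c_{L,i,k},G_{L,i,k}\rangle\subset\mathbb{R}^p$ such that $h_{i,k}(x)-h_{i,k}(x^*_{i,k})-J_{i,k}(x-x^*_{i,k})\in\langle c_{L,i,k},G_{L,i,k}\rangle$ for every $x$ in the current zonotope $\langle\bar c_k,\bar G_k\rangle$; then set $\bar c_k\leftarrow\bar c_k-\lambda_{i,k}\big(h_{i,k}(x^*_{i,k})+J_{i,k}(\bar c_k-x^*_{i,k})+c_{L,i,k}\big)$ and $\bar G_k\leftarrow\big[(I-\lambda_{i,k}J_{i,k})\bar G_k,\ \lambda_{i,k}\operatorname{diag}(r_{i,k}),\ -\lambda_{i,k}G_{L,i,k}\big]$ (all updates using the values of $\bar c_k,\bar G_k$ before the update). Then the resulting zonotope $\bar{\mathcal{Z}}_k=\langle\bar c_k,\bar G_k\rangle$ satisfies $\bar{\mathcal{Z}}_k\supseteq\mathcal{R}_{\phi,k}$.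
   Context: A zonotope with center $c\in\mathbb{R}^n$ and generator matrix $G\in\mathbb{R}^{n\times\gamma}$ is $\langle c,G\rangle=\{c+G\beta:\beta\in[-1,1]^\gamma\}$. Consider the discrete-time system $x(k+1)=f(x(k),u(k))+w(k)$ with $f$ an unknown twice differentiable function, process noise $w(k)\in\mathcal{Z}_w$ ($\mathcal{Z}_w$ a zonotope), inputs $u(k)\in\mathcal{U}_k$ (zonotopes), initial set $\mathcal{X}_0$ (a zonotope), and signal temporal logic side-information formulas $\phi_k=\phi_{1,k}\wedge\dots\wedge\phi_{n_{\phi,k},k}$ for each step $k$. The STL-constrained reachable set is $\mathcal{R}_{\phi,N}=\{x(N)\in\mathbb{R}^n:\ x(0)\in\mathcal{X}_0,\ x(0)\models\phi_0,\ \text{and for all }k\in\{0,\dots,N-1\}:\ x(k+1)=f(x(k),u(k))+w(k),\ w(k)\in\mathcal{Z}_w,\ u(k)\in\mathcal{U}_k,\ x(k+1)\models\phi_{k+1}\}$. For $r\in\mathbb{R}^p$, $\operatorname{diag}(r)$ denotes the diagonal matrix with diagonal $r$. *)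

theory Defs
  imports "HOL-Analysis.Analysis"
begin

text \<open>Zonotope with center c and generator matrix given as the list of its columns:
  zono c G = { c + G beta : beta in [-1,1]^gamma }.\<close>
definition zono :: "'a::real_vector \<Rightarrow> 'a list \<Rightarrow> 'a set" where
  "zono c G = {c + (\<Sum>l<length G. \<beta> l *\<^sub>R G ! l) | \<beta>. \<forall>l<length G. \<bar>\<beta> l\<bar> \<le> 1}"

text \<open>Vectors in R^p are functions nat => real (only indices j < p matter);
  a p x n matrix is given by its rows (nat => real^n); an n x p matrix lambda
  by its columns (nat => real^n).  lamv lam p v = lambda * v.\<close>
definition lamv :: "(nat \<Rightarrow> real^'n) \<Rightarrow> nat \<Rightarrow> (nat \<Rightarrow> real) \<Rightarrow> real^'n" where
  "lamv lam p v = (\<Sum>j<p. v j *\<^sub>R lam j)"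

text \<open>Side information: linear (p, H, y, r) or nonlinear (p, h, r).\<close>
datatype 'n sideinfo =
    Lin nat "nat \<Rightarrow> real^'n" "nat \<Rightarrow> real" "nat \<Rightarrow> real"
  | Nonlin nat "real^'n \<Rightarrow> nat \<Rightarrow> real" "nat \<Rightarrow> real"

fun sinfo_set :: "'n::finite sideinfo \<Rightarrow> (real^'n) set" where
  "sinfo_set (Lin p H y r) = {x. \<forall>j<p. \<bar>H j \<bullet> x - y j\<bar> \<le> r j}"
| "sinfo_set (Nonlin p h r) = {x. \<forall>j<p. \<bar>h x j\<bar> \<le> r j}"

fun sinfo_wf :: "'n::finite sideinfo \<Rightarrow> bool" where
  "sinfo_wf (Lin p H y r) = (\<forall>j<p. 0 \<le> r j)"
| "sinfo_wf (Nonlin p h r) = ((\<forall>j<p. 0 \<le> r j) \<and>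
      (\<forall>j<p. \<forall>x. (\<lambda>z. h z j) differentiable (at x)))"

text \<open>One update step of the procedure, with all admissible choices existentially
  quantified (lambda arbitrary; x*, J = Jacobian at x*, and a bounding zonotope
  for the linearisation error over the current zonotope).\<close>
fun upd_step :: "'n::finite sideinfo \<Rightarrow> ((real^'n) \<times> (real^'n) list)
                   \<Rightarrow> ((real^'n) \<times> (real^'n) list) \<Rightarrow> bool" where
  "upd_step (Lin p H y r) (c, G) (c', G') =
     (\<exists>lam. c' = c + lamv lam p (\<lambda>j. y j - H j \<bullet> c) \<and>
            G' = map (\<lambda>g. g - lamv lam p (\<lambda>j. H j \<bullet> g)) G
                 @ map (\<lambda>j. r j *\<^sub>R lam j) [0..<p])"
| "upd_step (Nonlin p h r) (c, G) (c', G') =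
     (\<exists>lam xs J cL GL.
        (\<forall>j<p. ((\<lambda>z. h z j) has_derivative (\<lambda>v. J j \<bullet> v)) (at xs)) \<and>
        (\<forall>x\<in>zono c G. \<exists>\<beta>. (\<forall>l<length GL. \<bar>\<beta> l\<bar> \<le> 1) \<and>
            (\<forall>j<p. h x j - h xs j - J j \<bullet> (x - xs) = cL j + (\<Sum>l<length GL. \<beta> l * (GL ! l) j))) \<and>
        c' = c - lamv lam p (\<lambda>j. h xs j + J j \<bullet> (c - xs) + cL j) \<and>
        G' = map (\<lambda>g. g - lamv lam p (\<lambda>j. J j \<bullet> g)) G
             @ map (\<lambda>j. r j *\<^sub>R lam j) [0..<p]
             @ map (\<lambda>gl. - lamv lam p gl) GL)"

end

theory Submission
  imports Defs
begin

text \<open>Each update is a correction \<open>x = (x - K x) + (K x - d) + d\<close> with \<open>K = \<lambda>A\<close>, where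
  \<open>A\<close> is \<open>H\<close> or \<open>J\<close>. For \<open>x\<close> in the current zonotope \<open>\<langle>c,G\<rangle>\<close>, the part \<open>(I - K) x\<close> lies
  in the image zonotope \<open>\<langle>(I - K) c, (I - K) G\<rangle>\<close>, while the side information (together with
  the bound on the linearisation error in the nonlinear case) places the residual \<open>K x - d\<close>
  in the zonotope generated by \<open>\<lambda> diag(r)\<close> (and \<open>-\<lambda> G\<^sub>L\<close>). Minkowski sums of zonotopes
  concatenate generators, so each step keeps every point satisfying the side information.\<close>

lemma zono_memI:
  assumes "\<forall>l<length G. \<bar>\<beta> l\<bar> \<le> 1" and "x = c + (\<Sum>l<length G. \<beta> l *\<^sub>R G ! l)"
  shows "x \<in> zono c G"
  using assms unfolding zono_def by blast

lemma zono_memE: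
  assumes "x \<in> zono c G"
  obtains \<beta> where "\<forall>l<length G. \<bar>\<beta> l\<bar> \<le> 1" and "x = c + (\<Sum>l<length G. \<beta> l *\<^sub>R G ! l)"
  using assms unfolding zono_def by blast

lemma zono_add:
  fixes A B :: "'a::real_vector list"
  assumes "u \<in> zono c A" and "v \<in> zono d B"
  shows "u + v \<in> zono (c + d) (A @ B)"
proof -
  obtain \<alpha> where \<alpha>: "\<forall>l<length A. \<bar>\<alpha> l\<bar> \<le> 1" and u: "u = c + (\<Sum>l<length A. \<alpha> l *\<^sub>R A ! l)"
    using assms(1) by (rule zono_memE)
  obtain \<beta> where \<beta>: "\<forall>l<length B. \<bar>\<beta> l\<bar> \<le> 1" and v: "v = d + (\<Sum>l<length B. \<beta> l *\<^sub>R B ! l)"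
    using assms(2) by (rule zono_memE)
  define \<gamma> where "\<gamma> l = (if l < length A then \<alpha> l else \<beta> (l - length A))" for l
  let ?f = "\<lambda>l. \<gamma> l *\<^sub>R (A @ B) ! l"
  have "(\<Sum>l<length (A @ B). ?f l) = (\<Sum>l<length A. ?f l) + (\<Sum>l = length A..<length A + length B. ?f l)"
    by (simp add: atLeast0LessThan[symmetric] sum.atLeastLessThan_concat)
  also have "(\<Sum>l = length A..<length A + length B. ?f l) = (\<Sum>l<length B. ?f (l + length A))"
    using sum.shift_bounds_nat_ivl[of ?f 0 "length A" "length B"]
    by (simp add: atLeast0LessThan add.commute)
  finally have "(\<Sum>l<length (A @ B). ?f l)
      = (\<Sum>l<length A. \<alpha> l *\<^sub>R A ! l) + (\<Sum>l<length B. \<beta> l *\<^sub>R B ! l)"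
    by (simp add: \<gamma>_def nth_append)
  moreover have "\<forall>l<length (A @ B). \<bar>\<gamma> l\<bar> \<le> 1"
    using \<alpha> \<beta> by (simp add: \<gamma>_def)
  ultimately show ?thesis
    using u v by (intro zono_memI[of _ \<gamma>]) (simp_all add: algebra_simps)
qed

lemma zono_translate:
  assumes "x \<in> zono c G"
  shows "x + d \<in> zono (c + d) G"
  using assms unfolding zono_def by (auto simp: algebra_simps)

lemma zono_linear_image:
  assumes "linear f" and "x \<in> zono c G"
  shows "f x \<in> zono (f c) (map f G)"
proof -
  obtain \<beta> where \<beta>: "\<forall>l<length G. \<bar>\<beta> l\<bar> \<le> 1" and x: "x = c + (\<Sum>l<length G. \<beta> l *\<^sub>R G ! l)"
    using assms(2) by (rule zono_memE)
  have "f x = f c + (\<Sum>l<length G. \<beta> l *\<^sub>R f (G ! l))"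
    using assms(1) by (simp add: x linear_add linear_sum linear_scale)
  then show ?thesis
    using \<beta> by (intro zono_memI[of _ \<beta>]) simp_all
qed

lemma zono_correction:
  fixes K :: "'a::real_vector \<Rightarrow> 'a"
  assumes "linear K" and "x \<in> zono c G" and "K x - d \<in> zono 0 E"
  shows "x \<in> zono (c - K c + d) (map (\<lambda>g. g - K g) G @ E)"
proof -
  have "linear (\<lambda>z. z - K z)"
    using assms(1) by (intro linear_compose_sub linear_id[unfolded id_def])
  then have "x - K x \<in> zono (c - K c) (map (\<lambda>g. g - K g) G)"
    using assms(2) by (rule zono_linear_image)
  then have "(x - K x) + (K x - d) + d \<in> zono (c - K c + 0 + d) (map (\<lambda>g. g - K g) G @ E)"
    using assms(3) by (intro zono_translate zono_add)
  then show ?thesis by simp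
qed

lemma lamv_add: "lamv lam p (\<lambda>j. a j + b j) = lamv lam p a + lamv lam p b"
  by (simp add: lamv_def scaleR_add_left sum.distrib)

lemma lamv_diff: "lamv lam p (\<lambda>j. a j - b j) = lamv lam p a - lamv lam p b"
  by (simp add: lamv_def scaleR_diff_left sum_subtractf)

lemma lamv_scale: "lamv lam p (\<lambda>j. t * a j) = t *\<^sub>R lamv lam p a"
  by (simp add: lamv_def scaleR_sum_right)

lemma lamv_sum: "lamv lam p (\<lambda>j. \<Sum>l\<in>A. f l j) = (\<Sum>l\<in>A. lamv lam p (f l))"
  by (simp add: lamv_def scaleR_sum_left sum.swap[of _ A])

lemma lamv_cong: "(\<And>j. j < p \<Longrightarrow> a j = b j) \<Longrightarrow> lamv lam p a = lamv lam p b"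
  by (simp add: lamv_def)

lemma linear_lamv_rows: "linear (\<lambda>z. lamv lam p (\<lambda>j. A j \<bullet> z))"
  by (rule linearI) (simp_all add: inner_add_right lamv_add lamv_scale)

lemma lamv_box_in_zono:
  assumes "\<forall>j<p. \<bar>v j\<bar> \<le> r j"
  shows "lamv lam p v \<in> zono 0 (map (\<lambda>j. r j *\<^sub>R lam j) [0..<p])"
proof (rule zono_memI[of _ "\<lambda>j. v j / r j"])
  \<comment> \<open>if \<open>r j = 0\<close> then \<open>v j = 0\<close>, and the junk value \<open>v j / 0 = 0\<close> is still the right coefficient\<close>
  have coeff: "v j / r j * r j = v j" and bound: "\<bar>v j / r j\<bar> \<le> 1" if "j < p" for j
  proof -
    have "\<bar>v j\<bar> \<le> r j"
      using assms that by blast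
    then show "v j / r j * r j = v j" "\<bar>v j / r j\<bar> \<le> 1"
      by (cases "r j = 0"; simp add: abs_divide)+
  qed
  have "(\<Sum>l<p. (v l / r l) *\<^sub>R map (\<lambda>j. r j *\<^sub>R lam j) [0..<p] ! l) = lamv lam p v"
    unfolding lamv_def
  proof (rule sum.cong)
    fix l assume "l \<in> {..<p}"
    then have "(v l / r l) *\<^sub>R map (\<lambda>j. r j *\<^sub>R lam j) [0..<p] ! l = (v l / r l * r l) *\<^sub>R lam l"
      by simp
    also have "\<dots> = v l *\<^sub>R lam l"
      using \<open>l \<in> {..<p}\<close> coeff by simp
    finally show "(v l / r l) *\<^sub>R map (\<lambda>j. r j *\<^sub>R lam j) [0..<p] ! l = v l *\<^sub>R lam l" .
  qed simp
  then show "lamv lam p v = 0 + (\<Sum>l<length (map (\<lambda>j. r j *\<^sub>R lam j) [0..<p]).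
      (v l / r l) *\<^sub>R map (\<lambda>j. r j *\<^sub>R lam j) [0..<p] ! l)"
    by simp
  show "\<forall>l<length (map (\<lambda>j. r j *\<^sub>R lam j) [0..<p]). \<bar>v l / r l\<bar> \<le> 1"
    using bound by simp
qed

lemma lamv_neg_combination_in_zono:
  assumes "\<forall>l<length GL. \<bar>\<delta> l\<bar> \<le> 1"
  shows "- lamv lam p (\<lambda>j. \<Sum>l<length GL. \<delta> l * (GL ! l) j)
           \<in> zono 0 (map (\<lambda>gl. - lamv lam p gl) GL)"
proof (rule zono_memI)
  show "\<forall>l<length (map (\<lambda>gl. - lamv lam p gl) GL). \<bar>\<delta> l\<bar> \<le> 1"
    using assms by simp
  have "lamv lam p (\<lambda>j. \<Sum>l<length GL. \<delta> l * (GL ! l) j) = (\<Sum>l<length GL. \<delta> l *\<^sub>R lamv lam p (GL ! l))"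
    by (simp only: lamv_sum lamv_scale)
  then show "- lamv lam p (\<lambda>j. \<Sum>l<length GL. \<delta> l * (GL ! l) j) = 0 +
      (\<Sum>l<length (map (\<lambda>gl. - lamv lam p gl) GL). \<delta> l *\<^sub>R map (\<lambda>gl. - lamv lam p gl) GL ! l)"
    by (simp add: sum_negf)
qed

lemma upd_step_Lin_sound:
  assumes "x \<in> zono c G" and "x \<in> sinfo_set (Lin p H y r)"
    and "upd_step (Lin p H y r) (c, G) (c', G')"
  shows "x \<in> zono c' G'"
proof -
  obtain lam where c': "c' = c + lamv lam p (\<lambda>j. y j - H j \<bullet> c)"
    and G': "G' = map (\<lambda>g. g - lamv lam p (\<lambda>j. H j \<bullet> g)) G @ map (\<lambda>j. r j *\<^sub>R lam j) [0..<p]"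
    using assms(3) by auto
  let ?K = "\<lambda>z. lamv lam p (\<lambda>j. H j \<bullet> z)"
  have "lamv lam p (\<lambda>j. H j \<bullet> x - y j) \<in> zono 0 (map (\<lambda>j. r j *\<^sub>R lam j) [0..<p])"
    using assms(2) by (intro lamv_box_in_zono) simp
  then have "?K x - lamv lam p y \<in> zono 0 (map (\<lambda>j. r j *\<^sub>R lam j) [0..<p])"
    by (simp only: lamv_diff)
  then have "x \<in> zono (c - ?K c + lamv lam p y) G'"
    unfolding G' by (rule zono_correction[OF linear_lamv_rows assms(1)])
  moreover have "c' = c - ?K c + lamv lam p y"
    unfolding c' lamv_diff by simp
  ultimately show ?thesis by simp
qed

lemma upd_step_Nonlin_sound:
  assumes "x \<in> zono c G" and "x \<in> sinfo_set (Nonlin p h r)"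
    and "upd_step (Nonlin p h r) (c, G) (c', G')"
  shows "x \<in> zono c' G'"
proof -
  obtain lam xs J cL GL where
    err: "\<forall>x\<in>zono c G. \<exists>\<beta>. (\<forall>l<length GL. \<bar>\<beta> l\<bar> \<le> 1) \<and>
            (\<forall>j<p. h x j - h xs j - J j \<bullet> (x - xs) = cL j + (\<Sum>l<length GL. \<beta> l * (GL ! l) j))"
    and c': "c' = c - lamv lam p (\<lambda>j. h xs j + J j \<bullet> (c - xs) + cL j)"
    and G': "G' = map (\<lambda>g. g - lamv lam p (\<lambda>j. J j \<bullet> g)) G
             @ map (\<lambda>j. r j *\<^sub>R lam j) [0..<p] @ map (\<lambda>gl. - lamv lam p gl) GL"
    using assms(3) by auto
  obtain \<delta> where \<delta>: "\<forall>l<length GL. \<bar>\<delta> l\<bar> \<le> 1"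
    and lin_err: "\<forall>j<p. h x j - h xs j - J j \<bullet> (x - xs) = cL j + (\<Sum>l<length GL. \<delta> l * (GL ! l) j)"
    using err assms(1) by blast
  let ?K = "\<lambda>z. lamv lam p (\<lambda>j. J j \<bullet> z)"
  let ?e = "lamv lam p (\<lambda>j. h xs j - J j \<bullet> xs + cL j)"
  let ?w = "\<lambda>j. \<Sum>l<length GL. \<delta> l * (GL ! l) j"
  have "J j \<bullet> x + (h xs j - J j \<bullet> xs + cL j) = h x j - ?w j" if "j < p" for j
    using lin_err[rule_format, OF that] unfolding inner_diff_right by linarith
  then have "?K x + ?e = lamv lam p (\<lambda>j. h x j - ?w j)"
    unfolding lamv_add[symmetric] by (rule lamv_cong)
  then have residual: "?K x - (- ?e) = lamv lam p (\<lambda>j. h x j) + - lamv lam p ?w"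
    by (simp add: lamv_diff)
  have "lamv lam p (\<lambda>j. h x j) + - lamv lam p ?w \<in> zono (0 + 0)
      (map (\<lambda>j. r j *\<^sub>R lam j) [0..<p] @ map (\<lambda>gl. - lamv lam p gl) GL)"
    using assms(2) \<delta> by (intro zono_add lamv_box_in_zono lamv_neg_combination_in_zono) simp_all
  then have "?K x - (- ?e) \<in> zono 0
      (map (\<lambda>j. r j *\<^sub>R lam j) [0..<p] @ map (\<lambda>gl. - lamv lam p gl) GL)"
    by (simp only: residual add_0_left)
  then have "x \<in> zono (c - ?K c + - ?e) G'"
    unfolding G' by (rule zono_correction[OF linear_lamv_rows assms(1)])
  moreover have "lamv lam p (\<lambda>j. h xs j + J j \<bullet> (c - xs) + cL j) = ?K c + ?e"
    unfolding lamv_add[symmetric] by (rule lamv_cong) (simp add: inner_diff_right)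
  ultimately show ?thesis
    unfolding c' by (simp add: algebra_simps)
qed

lemma upd_step_sound:
  assumes "x \<in> zono c G" and "x \<in> sinfo_set S" and "upd_step S (c, G) (c', G')"
  shows "x \<in> zono c' G'"
proof (cases S)
  case Lin
  then show ?thesis using assms upd_step_Lin_sound by blast
next
  case Nonlin
  then show ?thesis using assms upd_step_Nonlin_sound by blast
qed

theorem theorem1:
  fixes R :: "(real^'n::finite) set"
    and c0 :: "real^'n" and G0 :: "(real^'n) list"
    and infos :: "'n sideinfo list"
    and Zs :: "((real^'n) \<times> (real^'n) list) list"
  assumes "R \<subseteq> zono c0 G0"
    and "\<forall>S\<in>set infos. sinfo_wf S"
    and "\<forall>S\<in>set infos. R \<subseteq> sinfo_set S"
    and "length Zs = Suc (length infos)"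
    and "Zs ! 0 = (c0, G0)"
    and "\<forall>i<length infos. upd_step (infos ! i) (Zs ! i) (Zs ! Suc i)"
  shows "R \<subseteq> zono (fst (last Zs)) (snd (last Zs))"
proof
  fix x assume "x \<in> R"
  have "x \<in> zono (fst (Zs ! i)) (snd (Zs ! i))" if "i \<le> length infos" for i
    using that
  proof (induction i)
    case 0
    have "x \<in> zono c0 G0"
      using assms(1) \<open>x \<in> R\<close> by blast
    then show ?case
      using assms(5) by simp
  next
    case (Suc i)
    then have "i < length infos" by simp
    then have "x \<in> sinfo_set (infos ! i)"
      using assms(3) \<open>x \<in> R\<close> nth_mem by blast
    moreover have "upd_step (infos ! i) (fst (Zs ! i), snd (Zs ! i)) (fst (Zs ! Suc i), snd (Zs ! Suc i))"
      using assms(6) \<open>i < length infos\<close> by simp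
    moreover have "x \<in> zono (fst (Zs ! i)) (snd (Zs ! i))"
      using Suc by simp
    ultimately show ?case
      by (blast intro: upd_step_sound)
  qed
  moreover have "last Zs = Zs ! length infos"
    using assms(4) last_conv_nth[of Zs] by fastforce
  ultimately show "x \<in> zono (fst (last Zs)) (snd (last Zs))" by simp
qed

end
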